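(* Let $G=(V,E,C,\ell)$ be an edge-labeled hypergraph with exactly two categories $C=\{c_1,c_2\}$. Construct a directed graph $G'=(V',E')$ with unit arc capacities as follows. $V'$ consists of $V$, two terminal nodes $s$ and $t$, and one new auxiliary node $u_e$ for each hyperedge $e\in E$. For each hyperedge $e=\{v_1,\dots,v_r\}\in E$: if $\ell(e)=c_1$, add the arcs $(s,u_e),(u_e,v_1),\dots,(u_e,v_r)$; if $\ell(e)=c_2$, add the arcs $(u_e,t),(v_1,u_e),\dots,(v_r,u_e)$. Let $S^*\subseteq V'$ with $s\in S^*$, $t\notin S^*$ be a minimum $s$-$t$ cut, i.e. a set minimizing the number of arcs $(a,b)\in E'$ with $a\in S^*$, $b\notin S^*$ among all subsets of $V'$ containing $s$ and not $t$. Define $Y:V\to C$ by $Y[i]=c_1$ if $i\in S^*$ and $Y[i]=c_2$ if $i\notin S^*$. Then $Y$ minimizes $\mathrm{CatEdgeClus}$ over all clusterings $V\to C$.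
   Context: An edge-labeled hypergraph $G=(V,E,C,\ell)$ consists of a finite node set $V$, a finite collection $E$ of hyperedges (nonempty subsets of $V$), a finite set $C$ of categories, and a labeling $\ell:E\to C$. A clustering is a map $Y:V\to C$. For $e\in E$, $m_Y(e)=1$ if $Y[i]\neq\ell(e)$ for some $i\in e$, and $m_Y(e)=0$ otherwise. The Categorical Edge Clustering objective is $\mathrm{CatEdgeClus}(Y)=\sum_{e\in E}m_Y(e)$. *)

theory Defs
  imports Main
begin

text \<open>Edge-labeled hypergraph: node set V, hyperedges indexed by a finite index
set E (so a collection may contain repeated hyperedges), hyperedge map hedge,
category set C, labeling lab.\<close>

definition edge_labeled_hypergraph ::
  "'v set \<Rightarrow> 'e set \<Rightarrow> ('e \<Rightarrow> 'v set) \<Rightarrow> 'c set \<Rightarrow> ('e \<Rightarrow> 'c) \<Rightarrow> bool" where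
  "edge_labeled_hypergraph V E hedge C lab \<longleftrightarrow>
     finite V \<and> finite E \<and> finite C \<and>
     (\<forall>e\<in>E. hedge e \<noteq> {} \<and> hedge e \<subseteq> V) \<and> (\<forall>e\<in>E. lab e \<in> C)"

definition is_clustering :: "'v set \<Rightarrow> 'c set \<Rightarrow> ('v \<Rightarrow> 'c) \<Rightarrow> bool" where
  "is_clustering V C Y \<longleftrightarrow> (\<forall>i\<in>V. Y i \<in> C)"

definition mistake :: "('e \<Rightarrow> 'v set) \<Rightarrow> ('e \<Rightarrow> 'c) \<Rightarrow> ('v \<Rightarrow> 'c) \<Rightarrow> 'e \<Rightarrow> nat" where
  "mistake hedge lab Y e = (if \<exists>i\<in>hedge e. Y i \<noteq> lab e then 1 else 0)"

definition CatEdgeClus :: "'e set \<Rightarrow> ('e \<Rightarrow> 'v set) \<Rightarrow> ('e \<Rightarrow> 'c) \<Rightarrow> ('v \<Rightarrow> 'c) \<Rightarrow> nat" where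
  "CatEdgeClus E hedge lab Y = (\<Sum>e\<in>E. mistake hedge lab Y e)"

datatype ('v, 'e) cnode = Orig 'v | Src | Snk | Aux 'e

definition cut_nodes :: "'v set \<Rightarrow> 'e set \<Rightarrow> ('v, 'e) cnode set" where
  "cut_nodes V E = Orig ` V \<union> {Src, Snk} \<union> Aux ` E"

definition cut_arcs :: "'e set \<Rightarrow> ('e \<Rightarrow> 'v set) \<Rightarrow> ('e \<Rightarrow> 'c) \<Rightarrow> 'c \<Rightarrow> 'c
    \<Rightarrow> (('v, 'e) cnode \<times> ('v, 'e) cnode) set" where
  "cut_arcs E hedge lab c1 c2 =
     {(Src, Aux e) | e. e \<in> E \<and> lab e = c1}
   \<union> {(Aux e, Orig v) | e v. e \<in> E \<and> lab e = c1 \<and> v \<in> hedge e}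
   \<union> {(Aux e, Snk) | e. e \<in> E \<and> lab e = c2}
   \<union> {(Orig v, Aux e) | e v. e \<in> E \<and> lab e = c2 \<and> v \<in> hedge e}"

definition cut_value :: "('n \<times> 'n) set \<Rightarrow> 'n set \<Rightarrow> nat" where
  "cut_value A S = card {(a, b). (a, b) \<in> A \<and> a \<in> S \<and> b \<notin> S}"

definition is_st_cut :: "'n set \<Rightarrow> 'n \<Rightarrow> 'n \<Rightarrow> 'n set \<Rightarrow> bool" where
  "is_st_cut N s t S \<longleftrightarrow> S \<subseteq> N \<and> s \<in> S \<and> t \<notin> S"

definition is_min_st_cut :: "'n set \<Rightarrow> ('n \<times> 'n) set \<Rightarrow> 'n \<Rightarrow> 'n \<Rightarrow> 'n set \<Rightarrow> bool" where
  "is_min_st_cut N A s t S \<longleftrightarrow> is_st_cut N s t S \<and>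
     (\<forall>S'. is_st_cut N s t S' \<longrightarrow> cut_value A S \<le> cut_value A S')"

end

theory Submission
  imports Defs
begin

text \<open>If S is any s-t cut, every hyperedge e that the clustering read off S gets wrong
has a cut arc incident to its auxiliary node u_e, so that clustering costs at most the cut
value. Conversely, a clustering Y induces the cut consisting of Src, the nodes Y puts in c1,
and u_e exactly for the c1-edges lying inside c1 and the c2-edges meeting c1; its only cut
arcs are Src \<rightarrow> u_e or u_e \<rightarrow> Snk for hyperedges e that Y gets wrong. Hence the cut value of
a minimum cut lies between the cost of its clustering and the cost of any Y.\<close>

definition mistakes :: "'e set \<Rightarrow> ('e \<Rightarrow> 'v set) \<Rightarrow> ('e \<Rightarrow> 'c) \<Rightarrow> ('v \<Rightarrow> 'c) \<Rightarrow> 'e set" where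
  "mistakes E hedge lab Y = {e \<in> E. \<exists>i\<in>hedge e. Y i \<noteq> lab e}"

lemma CatEdgeClus_eq_card_mistakes:
  assumes "finite E"
  shows "CatEdgeClus E hedge lab Y = card (mistakes E hedge lab Y)"
  using assms by (simp add: CatEdgeClus_def mistake_def mistakes_def sum.If_cases Int_def)

lemma finite_cut_arcs:
  assumes "finite V" "finite E" "\<forall>e\<in>E. hedge e \<subseteq> V"
  shows "finite (cut_arcs E hedge lab c1 c2)"
proof (rule finite_subset)
  show "cut_arcs E hedge lab c1 c2 \<subseteq> cut_nodes V E \<times> cut_nodes V E"
    using assms(3) unfolding cut_arcs_def cut_nodes_def by auto
  show "finite (cut_nodes V E \<times> cut_nodes V E)"
    using assms(1,2) unfolding cut_nodes_def by simp
qed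

fun aux_edge :: "('v, 'e) cnode \<times> ('v, 'e) cnode \<Rightarrow> 'e" where
  "aux_edge (Aux e, _) = e"
| "aux_edge (_, Aux e) = e"
| "aux_edge _ = undefined"

lemma card_mistakes_le_cut_value:
  assumes "finite (cut_arcs E hedge lab c1 c2)"
    and "\<forall>e\<in>E. lab e = c1 \<or> lab e = c2"
    and "Src \<in> S" "Snk \<notin> S"
  shows "card (mistakes E hedge lab (\<lambda>i. if Orig i \<in> S then c1 else c2))
     \<le> cut_value (cut_arcs E hedge lab c1 c2) S"
proof -
  let ?K = "{(a, b). (a, b) \<in> cut_arcs E hedge lab c1 c2 \<and> a \<in> S \<and> b \<notin> S}"
  have "mistakes E hedge lab (\<lambda>i. if Orig i \<in> S then c1 else c2) \<subseteq> aux_edge ` ?K"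
  proof
    fix e assume "e \<in> mistakes E hedge lab (\<lambda>i. if Orig i \<in> S then c1 else c2)"
    then obtain i where e: "e \<in> E" and i: "i \<in> hedge e"
      and wrong: "(if Orig i \<in> S then c1 else c2) \<noteq> lab e"
      unfolding mistakes_def by blast
    show "e \<in> aux_edge ` ?K"
    proof (cases "lab e = c1")
      case True
      with wrong have "Orig i \<notin> S" by auto
      then have "(Aux e, Orig i) \<in> ?K \<or> (Src, Aux e) \<in> ?K"
        using True e i assms(3) unfolding cut_arcs_def by auto
      then show ?thesis by force
    next
      case False
      with assms(2) e have "lab e = c2" by blast
      with wrong have "Orig i \<in> S" by (auto split: if_splits)
      then have "(Orig i, Aux e) \<in> ?K \<or> (Aux e, Snk) \<in> ?K"
        using \<open>lab e = c2\<close> e i assms(4) unfolding cut_arcs_def by auto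
      then show ?thesis by force
    qed
  qed
  moreover have "finite ?K"
    using assms(1) by (rule rev_finite_subset) auto
  ultimately show ?thesis
    unfolding cut_value_def by (meson card_image_le card_mono finite_imageI order_trans)
qed

definition cut_of_clustering :: "'v set \<Rightarrow> 'e set \<Rightarrow> ('e \<Rightarrow> 'v set) \<Rightarrow> ('e \<Rightarrow> 'c)
    \<Rightarrow> 'c \<Rightarrow> 'c \<Rightarrow> ('v \<Rightarrow> 'c) \<Rightarrow> ('v, 'e) cnode set" where
  "cut_of_clustering V E hedge lab c1 c2 Y =
     {Src} \<union> {Orig v | v. v \<in> V \<and> Y v = c1}
   \<union> {Aux e | e. e \<in> E \<and> lab e = c1 \<and> (\<forall>v\<in>hedge e. Y v = c1)}
   \<union> {Aux e | e. e \<in> E \<and> lab e = c2 \<and> (\<exists>v\<in>hedge e. Y v = c1)}"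

lemma is_st_cut_cut_of_clustering:
  "is_st_cut (cut_nodes V E) Src Snk (cut_of_clustering V E hedge lab c1 c2 Y)"
  unfolding is_st_cut_def cut_nodes_def cut_of_clustering_def by auto

lemma cut_value_cut_of_clustering_le:
  fixes V :: "'v set" and E :: "'e set"
  assumes "finite E" "\<forall>e\<in>E. hedge e \<subseteq> V" "c1 \<noteq> c2"
  shows "cut_value (cut_arcs E hedge lab c1 c2) (cut_of_clustering V E hedge lab c1 c2 Y)
     \<le> card (mistakes E hedge lab Y)"
proof -
  let ?S = "cut_of_clustering V E hedge lab c1 c2 Y"
  let ?K = "{(a, b). (a, b) \<in> cut_arcs E hedge lab c1 c2 \<and> a \<in> ?S \<and> b \<notin> ?S}"
  define terminal_arc :: "'e \<Rightarrow> ('v, 'e) cnode \<times> ('v, 'e) cnode" where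
    "terminal_arc e = (if lab e = c1 then (Src, Aux e) else (Aux e, Snk))" for e
  have "?K \<subseteq> terminal_arc ` mistakes E hedge lab Y"
  proof
    fix a assume "a \<in> ?K"
    then have a: "a \<in> cut_arcs E hedge lab c1 c2" "fst a \<in> ?S" "snd a \<notin> ?S"
      by auto
    from a(1) consider
        (src) e where "a = (Src, Aux e)" "e \<in> E" "lab e = c1"
      | (down) e v where "a = (Aux e, Orig v)" "e \<in> E" "lab e = c1" "v \<in> hedge e"
      | (snk) e where "a = (Aux e, Snk)" "e \<in> E" "lab e = c2"
      | (up) e v where "a = (Orig v, Aux e)" "e \<in> E" "lab e = c2" "v \<in> hedge e"
      unfolding cut_arcs_def by blast
    then show "a \<in> terminal_arc ` mistakes E hedge lab Y"
    proof cases
      case (src e)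
      with a have "e \<in> mistakes E hedge lab Y"
        by (auto simp: cut_of_clustering_def mistakes_def)
      with src show ?thesis by (auto simp: terminal_arc_def)
    next
      case (snk e)
      with a assms(3) have "e \<in> mistakes E hedge lab Y"
        by (auto simp: cut_of_clustering_def mistakes_def)
      with snk assms(3) show ?thesis by (force simp: terminal_arc_def)
    qed \<comment> \<open>arcs between u_e and a node of e are never cut\<close>
      (use a assms(2,3) in \<open>auto simp: cut_of_clustering_def\<close>)
  qed
  moreover have "finite (mistakes E hedge lab Y)"
    using assms(1) by (simp add: mistakes_def)
  ultimately show ?thesis
    unfolding cut_value_def by (meson card_image_le card_mono finite_imageI order_trans)
qed

theorem mainTheorem2:
  fixes V :: "'v set" and E :: "'e set" and hedge :: "'e \<Rightarrow> 'v set"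
    and C :: "'c set" and lab :: "'e \<Rightarrow> 'c" and c1 c2 :: 'c
    and S :: "('v, 'e) cnode set"
  assumes "edge_labeled_hypergraph V E hedge C lab"
    and "C = {c1, c2}" and "c1 \<noteq> c2"
    and "is_min_st_cut (cut_nodes V E) (cut_arcs E hedge lab c1 c2) Src Snk S"
  shows "is_clustering V C (\<lambda>i. if Orig i \<in> S then c1 else c2) \<and>
    (\<forall>Y'. is_clustering V C Y' \<longrightarrow>
       CatEdgeClus E hedge lab (\<lambda>i. if Orig i \<in> S then c1 else c2)
         \<le> CatEdgeClus E hedge lab Y')"
proof (intro conjI allI impI)
  let ?A = "cut_arcs E hedge lab c1 c2"
  let ?Y = "\<lambda>i. if Orig i \<in> S then c1 else c2"
  note G = assms(1)[unfolded edge_labeled_hypergraph_def]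
  have S: "Src \<in> S" "Snk \<notin> S"
    using assms(4) by (simp_all add: is_min_st_cut_def is_st_cut_def)
  show "is_clustering V C ?Y"
    using assms(2) by (simp add: is_clustering_def)
  fix Y'
  have "finite ?A"
    using G by (intro finite_cut_arcs) auto
  moreover have "\<forall>e\<in>E. lab e = c1 \<or> lab e = c2"
    using G assms(2) by simp
  ultimately have "CatEdgeClus E hedge lab ?Y \<le> cut_value ?A S"
    using card_mistakes_le_cut_value[OF _ _ S] G by (simp add: CatEdgeClus_eq_card_mistakes)
  also have "\<dots> \<le> cut_value ?A (cut_of_clustering V E hedge lab c1 c2 Y')"
    using assms(4) is_st_cut_cut_of_clustering[of V E hedge lab c1 c2 Y']
    unfolding is_min_st_cut_def by blast
  also have "\<dots> \<le> CatEdgeClus E hedge lab Y'"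
    using cut_value_cut_of_clustering_le[of E hedge V c1 c2 lab Y'] G assms(3)
    by (simp add: CatEdgeClus_eq_card_mistakes)
  finally show "CatEdgeClus E hedge lab ?Y \<le> CatEdgeClus E hedge lab Y'" .
qed

end
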